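(* Let $K$ be a field, $X$ a finite connected poset, $\varphi$ an elementary Lie automorphism of $I(X,K)$, $\theta=\theta_\varphi$, $\sigma=\sigma_\varphi$, and $x<y<z$ in $X$. Then either $\theta(e_{xz})=\theta(e_{xy})\theta(e_{yz})$, in which case $\sigma(x,z)=\sigma(x,y)\sigma(y,z)$, or $\theta(e_{xz})=\theta(e_{yz})\theta(e_{xy})$, in which case $\sigma(x,z)=-\sigma(x,y)\sigma(y,z)$.
   Context: $I(X,K)$ is the incidence algebra: functions $f:X\times X\to K$ with $f(x,y)=0$ unless $x\le y$, product $(fg)(x,y)=\sum_{x\le t\le y}f(x,t)g(t,y)$; $e_{xy}$ ($x\le y$) is the basis element equal to $1$ at $(x,y)$ and $0$ elsewhere. $B=\{e_{xy}:x<y\}$, $X^2_<=\{(x,y):x<y\}$. A Lie automorphism is a bijective linear map preserving $[f,g]=fg-gf$. With $l(\lfloor x,y\rfloor)$ the maximal length of a chain in $\{z:x\le z\le y\}$ and $L_i=\mathrm{span}_K\{e_{xy}:l(\lfloor x,y\rfloor)=i\}$, for a Lie automorphism $\psi$ let $\widetilde\psi$ send $e_{xy}\in L_i$ to the $L_i$-component of $\psi(e_{xy})$. A Lie automorphism $\varphi$ is elementary if $\varphi=\widetilde\psi$ for some Lie automorphism $\psi$ (equivalently $\varphi(L_i)\subseteq L_i$ for all $i$). For elementary $\varphi$, for each $x<y$ there are a unique $e_{uv}\in B$ and a unique $k\in K^*$ with $\varphi(e_{xy})=k e_{uv}$; set $\theta_\varphi(e_{xy})=e_{uv}$ and $\sigma_\varphi(x,y)=k$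 (then $\theta_\varphi:B\to B$ is a bijection). Connected means any two elements are joined by a sequence in which consecutive elements are in a covering relation. *)

theory Defs
  imports Main
begin

text \<open>Finite poset X is modelled as a type of class finite and order.
  Elements of the incidence algebra I(X,K) are functions 'a => 'a => 'k vanishing
  off the order relation.\<close>

definition incidence :: "('a::{finite,order} \<Rightarrow> 'a \<Rightarrow> 'k::field) set" where
  "incidence = {f. \<forall>x y. \<not> x \<le> y \<longrightarrow> f x y = 0}"

definition inc_mult :: "('a::{finite,order} \<Rightarrow> 'a \<Rightarrow> 'k::field) \<Rightarrow> ('a \<Rightarrow> 'a \<Rightarrow> 'k) \<Rightarrow> 'a \<Rightarrow> 'a \<Rightarrow> 'k" where
  "inc_mult f g = (\<lambda>x y. \<Sum>t\<in>{t. x \<le> t \<and> t \<le> y}. f x t * g t y)"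

definition inc_add :: "('a \<Rightarrow> 'a \<Rightarrow> 'k::field) \<Rightarrow> ('a \<Rightarrow> 'a \<Rightarrow> 'k) \<Rightarrow> 'a \<Rightarrow> 'a \<Rightarrow> 'k" where
  "inc_add f g = (\<lambda>x y. f x y + g x y)"

definition inc_smult :: "'k::field \<Rightarrow> ('a \<Rightarrow> 'a \<Rightarrow> 'k) \<Rightarrow> 'a \<Rightarrow> 'a \<Rightarrow> 'k" where
  "inc_smult k f = (\<lambda>x y. k * f x y)"

definition inc_bracket :: "('a::{finite,order} \<Rightarrow> 'a \<Rightarrow> 'k::field) \<Rightarrow> ('a \<Rightarrow> 'a \<Rightarrow> 'k) \<Rightarrow> 'a \<Rightarrow> 'a \<Rightarrow> 'k" where
  "inc_bracket f g = (\<lambda>x y. inc_mult f g x y - inc_mult g f x y)"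

definition ebas :: "'a \<Rightarrow> 'a \<Rightarrow> 'a \<Rightarrow> 'a \<Rightarrow> 'k::field" where
  "ebas x y = (\<lambda>u v. if u = x \<and> v = y then 1 else 0)"

definition Bset :: "('a::{finite,order} \<Rightarrow> 'a \<Rightarrow> 'k::field) set" where
  "Bset = {ebas x y | x y. x < y}"

definition lie_automorphism :: "(('a::{finite,order} \<Rightarrow> 'a \<Rightarrow> 'k::field) \<Rightarrow> ('a \<Rightarrow> 'a \<Rightarrow> 'k)) \<Rightarrow> bool" where
  "lie_automorphism \<psi> \<longleftrightarrow>
     bij_betw \<psi> incidence incidence \<and>
     (\<forall>f\<in>incidence. \<forall>g\<in>incidence. \<forall>a b.
        \<psi> (inc_add (inc_smult a f) (inc_smult b g)) = inc_add (inc_smult a (\<psi> f)) (inc_smult b (\<psi> g))) \<and>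
     (\<forall>f\<in>incidence. \<forall>g\<in>incidence. \<psi> (inc_bracket f g) = inc_bracket (\<psi> f) (\<psi> g))"

definition interval_length :: "'a::{finite,order} \<Rightarrow> 'a \<Rightarrow> nat" where
  "interval_length x y = Max {card C - 1 | C. C \<noteq> {} \<and> C \<subseteq> {z. x \<le> z \<and> z \<le> y} \<and>
                                   (\<forall>a\<in>C. \<forall>b\<in>C. a \<le> b \<or> b \<le> a)}"

definition L_comp :: "nat \<Rightarrow> ('a::{finite,order} \<Rightarrow> 'a \<Rightarrow> 'k::field) \<Rightarrow> 'a \<Rightarrow> 'a \<Rightarrow> 'k" where
  "L_comp i g = (\<lambda>u v. if u \<le> v \<and> interval_length u v = i then g u v else 0)"

definition tilde :: "(('a::{finite,order} \<Rightarrow> 'a \<Rightarrow> 'k::field) \<Rightarrow> ('a \<Rightarrow> 'a \<Rightarrow> 'k)) \<Rightarrow> ('a \<Rightarrow> 'a \<Rightarrow> 'k) \<Rightarrow> 'a \<Rightarrow> 'a \<Rightarrow> 'k" where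
  "tilde \<psi> f = (\<lambda>u v. \<Sum>p\<in>{(x,y). x \<le> y}.
                   f (fst p) (snd p) * L_comp (interval_length (fst p) (snd p)) (\<psi> (ebas (fst p) (snd p))) u v)"

definition elementary :: "(('a::{finite,order} \<Rightarrow> 'a \<Rightarrow> 'k::field) \<Rightarrow> ('a \<Rightarrow> 'a \<Rightarrow> 'k)) \<Rightarrow> bool" where
  "elementary \<phi> \<longleftrightarrow> lie_automorphism \<phi> \<and>
     (\<exists>\<psi>. lie_automorphism \<psi> \<and> (\<forall>f\<in>incidence. \<phi> f = tilde \<psi> f))"

definition theta :: "(('a::{finite,order} \<Rightarrow> 'a \<Rightarrow> 'k::field) \<Rightarrow> ('a \<Rightarrow> 'a \<Rightarrow> 'k)) \<Rightarrow> ('a \<Rightarrow> 'a \<Rightarrow> 'k) \<Rightarrow> ('a \<Rightarrow> 'a \<Rightarrow> 'k)" where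
  "theta \<phi> b = (THE c. c \<in> Bset \<and> (\<exists>k. k \<noteq> 0 \<and> \<phi> b = inc_smult k c))"

definition sigma :: "(('a::{finite,order} \<Rightarrow> 'a \<Rightarrow> 'k::field) \<Rightarrow> ('a \<Rightarrow> 'a \<Rightarrow> 'k)) \<Rightarrow> 'a \<Rightarrow> 'a \<Rightarrow> 'k" where
  "sigma \<phi> x y = (THE k. k \<noteq> 0 \<and> \<phi> (ebas x y) = inc_smult k (theta \<phi> (ebas x y)))"

definition covers :: "'a::order \<Rightarrow> 'a \<Rightarrow> bool" where
  "covers a b \<longleftrightarrow> a < b \<and> \<not> (\<exists>c. a < c \<and> c < b)"

definition poset_connected :: "'a::order itself \<Rightarrow> bool" where
  "poset_connected _ \<longleftrightarrow> (\<forall>a b::'a. (\<lambda>u v. covers u v \<or> covers v u)\<^sup>*\<^sup>* a b)"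

end

(*
  An elementary Lie automorphism \<phi> commutes with taking the diagonal part, so it maps
  diagonal elements to diagonal elements and each e_xy (x < y) to an element w with zero
  diagonal. Choosing diagonal d with \<phi>(d) = e_aa and applying \<phi> to
  [d, e_xy] = (d_xx - d_yy) e_xy shows that w is an eigenvector of every ad e_aa; as
  [e_aa, w](u,v) = (\<delta>_au - \<delta>_av) w(u,v), the support of w is a single pair,
  i.e. \<phi>(e_xy) = c e_pq with p < q. Applying \<phi> to e_xz = [e_xy, e_yz] then leaves only
  the two possibilities of the theorem, with the sign of the commutator.
*)

theory Submission
  imports Defs
begin

lemma ebas_same [simp]: "ebas p q p q = 1"
  by (simp add: ebas_def)

lemma ebas_neq_zero [simp]: "(ebas u v :: 'a \<Rightarrow> 'a \<Rightarrow> 'k::field) \<noteq> (\<lambda>_ _. 0)"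
  by (auto simp: ebas_def fun_eq_iff)

lemma ebas_in_incidence:
  "(x::'a::{finite,order}) \<le> y \<Longrightarrow> (ebas x y :: 'a \<Rightarrow> 'a \<Rightarrow> 'k::field) \<in> incidence"
  by (auto simp: incidence_def ebas_def)

lemma inc_mult_ebas:
  "inc_mult (ebas u v) (ebas u' v') =
     (if v = u' \<and> (u::'a::{finite,order}) \<le> v \<and> v \<le> v' then ebas u v' else (\<lambda>_ _. 0 :: 'k::field))"
proof (intro ext)
  fix a b
  have "inc_mult (ebas u v) (ebas u' v') a b =
      (\<Sum>t\<in>{t. a \<le> t \<and> t \<le> b}.
         if t = v then (if a = u \<and> v = u' \<and> b = v' then 1 else (0::'k)) else 0)"
    unfolding inc_mult_def ebas_def by (intro sum.cong) auto
  also have "\<dots> = (if a \<le> v \<and> v \<le> b \<and> a = u \<and> v = u' \<and> b = v' then 1 else 0)"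
    by (auto simp: sum.delta)
  also have "\<dots> = (if v = u' \<and> u \<le> v \<and> v \<le> v' then ebas u v' else (\<lambda>_ _. 0)) a b"
    by (auto simp: ebas_def)
  finally show "inc_mult (ebas u v) (ebas u' v') a b = \<dots>" .
qed

lemma inc_bracket_smult:
  "inc_bracket (inc_smult a f) (inc_smult b g) =
     inc_smult (a * b) (inc_bracket (f::'a::{finite,order} \<Rightarrow> 'a \<Rightarrow> 'k::field) g)"
  by (simp add: fun_eq_iff inc_bracket_def inc_mult_def inc_smult_def sum_distrib_left
      right_diff_distrib mult_ac)

definition diag_part :: "('a \<Rightarrow> 'a \<Rightarrow> 'k::field) \<Rightarrow> 'a \<Rightarrow> 'a \<Rightarrow> 'k" where
  "diag_part f = (\<lambda>a b. if a = b then f a b else 0)"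

lemma diag_part_in_incidence:
  "diag_part f \<in> (incidence :: ('a::{finite,order} \<Rightarrow> 'a \<Rightarrow> 'k::field) set)"
  by (simp add: diag_part_def incidence_def)

lemma diag_part_ebas: "diag_part (ebas a b) = (if a = b then ebas a b else (\<lambda>_ _. 0))"
  by (auto simp: diag_part_def ebas_def fun_eq_iff)

lemma inc_bracket_diag_part:
  assumes "h \<in> incidence"
  shows "inc_bracket (diag_part d) h a b = (d a a - d b b) * (h a b :: 'k::field)"
proof (cases "(a::'a::{finite,order}) \<le> b")
  case True
  have "inc_mult (diag_part d) h a b =
      (\<Sum>t\<in>{t. a \<le> t \<and> t \<le> b}. if t = a then d a a * h a b else 0)"
    unfolding inc_mult_def diag_part_def by (intro sum.cong) auto
  moreover have "inc_mult h (diag_part d) a b =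
      (\<Sum>t\<in>{t. a \<le> t \<and> t \<le> b}. if t = b then h a b * d b b else 0)"
    unfolding inc_mult_def diag_part_def by (intro sum.cong) auto
  ultimately show ?thesis using True by (simp add: inc_bracket_def algebra_simps sum.delta)
next
  case False
  then have no_between: "{t. a \<le> t \<and> t \<le> b} = {}" by (auto dest: order_trans)
  have "inc_bracket (diag_part d) h a b = 0"
    unfolding inc_bracket_def inc_mult_def no_between by simp
  then show ?thesis using assms False by (simp add: incidence_def)
qed

lemma zero_in_incidence:
  "(\<lambda>_ _. 0) \<in> (incidence :: ('a::{finite,order} \<Rightarrow> 'a \<Rightarrow> 'k::field) set)"
  by (simp add: incidence_def)

lemma interval_length_eq_0_iff:
  assumes "(x::'a::{finite,order}) \<le> y"
  shows "interval_length x y = 0 \<longleftrightarrow> x = y"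
proof -
  define S where "S = {card C - 1 | C. C \<noteq> {} \<and> C \<subseteq> {z. x \<le> z \<and> z \<le> y} \<and>
                          (\<forall>a\<in>C. \<forall>b\<in>C. a \<le> b \<or> b \<le> a)}"
  have "finite S" unfolding S_def by simp
  have "interval_length x y = Max S" unfolding S_def interval_length_def ..
  show ?thesis
  proof
    assume "interval_length x y = 0"
    moreover have "x \<noteq> y \<Longrightarrow> 1 \<in> S"
      using assms unfolding S_def by (intro CollectI exI[of _ "{x, y}"]) auto
    ultimately show "x = y"
      using Max_ge[OF \<open>finite S\<close>] \<open>interval_length x y = Max S\<close> by fastforce
  next
    assume "x = y"
    then have "{z. x \<le> z \<and> z \<le> y} = {y}" by (auto intro: order.antisym)
    then have "S = {0}" unfolding S_def by (auto dest!: subset_singletonD intro!: exI[of _ "{y}"])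
    then show "interval_length x y = 0" using \<open>interval_length x y = Max S\<close> by simp
  qed
qed

lemma interval_length_refl [simp]: "interval_length (u::'a::{finite,order}) u = 0"
  by (simp add: interval_length_eq_0_iff)

lemma L_comp_0: "L_comp 0 g u v = (if (u::'a::{finite,order}) = v then g u v else 0)"
  by (auto simp: L_comp_def interval_length_eq_0_iff)

lemma L_comp_diag: "L_comp i g u u = (if i = 0 then g (u::'a::{finite,order}) u else 0)"
  by (auto simp: L_comp_def interval_length_eq_0_iff)

lemma tilde_zero: "tilde \<psi> (\<lambda>_ _. 0) = (\<lambda>_ _. 0)"
  by (simp add: tilde_def)

lemma tilde_diag_part: "tilde \<psi> (diag_part f) = diag_part (tilde \<psi> f)"
proof (intro ext)
  fix u v :: 'a
  let ?L = "\<lambda>a b w. L_comp (interval_length a b) (\<psi> (ebas a b)) w"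
  have summand: "diag_part f (fst p) (snd p) * ?L (fst p) (snd p) u v =
      (if u = v then f (fst p) (snd p) * ?L (fst p) (snd p) u u else 0)"
    if "p \<in> {(a, b). a \<le> b}" for p
    using that by (auto simp: diag_part_def L_comp_0 L_comp_diag interval_length_eq_0_iff)
  have "tilde \<psi> (diag_part f) u v =
      (\<Sum>p\<in>{(a, b). a \<le> b}. if u = v then f (fst p) (snd p) * ?L (fst p) (snd p) u u else 0)"
    unfolding tilde_def by (rule sum.cong[OF refl summand])
  also have "\<dots> = diag_part (tilde \<psi> f) u v"
    by (simp add: tilde_def diag_part_def)
  finally show "tilde \<psi> (diag_part f) u v = diag_part (tilde \<psi> f) u v" .
qed

lemma lie_automorphism_in_incidence:
  "lie_automorphism \<phi> \<Longrightarrow> f \<in> incidence \<Longrightarrow> \<phi> f \<in> incidence"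
  unfolding lie_automorphism_def bij_betw_def by blast

lemma lie_automorphism_bracket:
  "lie_automorphism \<phi> \<Longrightarrow> f \<in> incidence \<Longrightarrow> g \<in> incidence \<Longrightarrow>
     \<phi> (inc_bracket f g) = inc_bracket (\<phi> f) (\<phi> g)"
  unfolding lie_automorphism_def by blast

lemma lie_automorphism_smult:
  assumes "lie_automorphism \<phi>" and "f \<in> incidence"
  shows "\<phi> (inc_smult c f) = inc_smult c (\<phi> f)"
proof -
  have "\<phi> (inc_add (inc_smult c f) (inc_smult 0 f)) =
      inc_add (inc_smult c (\<phi> f)) (inc_smult 0 (\<phi> f))"
    using assms unfolding lie_automorphism_def by blast
  then show ?thesis by (simp add: inc_add_def inc_smult_def)
qed

lemma elementary_diag_part:
  assumes "elementary \<phi>" and "f \<in> incidence"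
  shows "\<phi> (diag_part f) = diag_part (\<phi> f)"
proof -
  obtain \<psi> where "\<forall>f\<in>incidence. \<phi> f = tilde \<psi> f"
    using assms(1) unfolding elementary_def by blast
  then show ?thesis using assms(2) diag_part_in_incidence by (metis tilde_diag_part)
qed

lemma elementary_zero:
  assumes "elementary \<phi>"
  shows "\<phi> (\<lambda>_ _. 0) = (\<lambda>_ _. 0)"
proof -
  obtain \<psi> where "\<forall>f\<in>incidence. \<phi> f = tilde \<psi> f"
    using assms unfolding elementary_def by blast
  then show ?thesis using zero_in_incidence by (metis tilde_zero)
qed

lemma elementary_ebas_diag_part:
  assumes "elementary \<phi>" and "x < y"
  shows "diag_part (\<phi> (ebas x y)) = (\<lambda>_ _. 0)"
proof -
  have "diag_part (\<phi> (ebas x y)) = \<phi> (diag_part (ebas x y))"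
    using assms by (simp add: elementary_diag_part ebas_in_incidence)
  then show ?thesis using assms by (auto simp: diag_part_ebas elementary_zero)
qed

lemma elementary_diag_preimage:
  assumes "elementary \<phi>"
  obtains f where "f \<in> incidence" "\<phi> (diag_part f) = ebas a a"
proof -
  have "\<phi> ` incidence = incidence"
    using assms unfolding elementary_def lie_automorphism_def bij_betw_def by blast
  then obtain f where f: "f \<in> incidence" "\<phi> f = ebas a a"
    using ebas_in_incidence[of a a] by (metis imageE order.refl)
  then have "\<phi> (diag_part f) = ebas a a"
    using elementary_diag_part[OF assms f(1)] by (simp add: diag_part_ebas)
  with f(1) show thesis by (rule that)
qed

lemma ad_ebas_eigenvector_support_unique:
  fixes w :: "'a::{finite,order} \<Rightarrow> 'a \<Rightarrow> 'k::field"
  assumes eigen: "\<And>a. \<exists>c. inc_bracket (ebas a a) w = inc_smult c w"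
    and w: "w \<in> incidence"
    and "w p q \<noteq> 0" "p < q" and "w u v \<noteq> 0" "u < v"
  shows "u = p \<and> v = q"
proof -
  \<comment> \<open>\<open>p < q\<close> and \<open>u < v\<close> exclude the swapped pair \<open>(u, v) = (q, p)\<close>, which has the
    same eigenvalues in characteristic 2.\<close>
  have "ebas a a s s - ebas a a t t = c"
    if "inc_bracket (ebas a a) w = inc_smult c w" "w s t \<noteq> 0" for a c s t
    using that(2) fun_cong[OF fun_cong[OF that(1), of s], of t]
      inc_bracket_diag_part[OF w, of "ebas a a" s t]
    by (simp add: diag_part_ebas inc_smult_def)
  then have "ebas a a u u - ebas a a v v = (ebas a a p p - ebas a a q q :: 'k)" for a
    using eigen[of a] \<open>w p q \<noteq> 0\<close> \<open>w u v \<noteq> 0\<close> by metis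
  from this[of p] this[of q] show ?thesis
    using \<open>p < q\<close> \<open>u < v\<close> by (auto simp: ebas_def split: if_splits)
qed

lemma eq_smult_ebas_if_support_singleton:
  assumes "\<And>u v. w u v \<noteq> 0 \<Longrightarrow> u = p \<and> v = q"
  shows "w = inc_smult (w p q) (ebas p q)"
  using assms by (auto simp: fun_eq_iff inc_smult_def ebas_def)

lemma elementary_ebas_eq_smult_ebas:
  fixes \<phi> :: "('a::{finite,order} \<Rightarrow> 'a \<Rightarrow> 'k::field) \<Rightarrow> ('a \<Rightarrow> 'a \<Rightarrow> 'k)"
  assumes \<phi>: "elementary \<phi>" and "x < y"
  obtains p q c where "p < q" "c \<noteq> 0" "\<phi> (ebas x y) = inc_smult c (ebas p q)"
proof -
  define w where "w = \<phi> (ebas x y)"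
  have lie: "lie_automorphism \<phi>" using \<phi> unfolding elementary_def by blast
  have e: "(ebas x y :: 'a \<Rightarrow> 'a \<Rightarrow> 'k) \<in> incidence"
    using \<open>x < y\<close> by (simp add: ebas_in_incidence)
  have w: "w \<in> incidence" unfolding w_def using lie e by (rule lie_automorphism_in_incidence)
  have w_diag: "w t t = 0" for t
  proof -
    have "diag_part w t t = 0" unfolding w_def elementary_ebas_diag_part[OF assms] ..
    then show ?thesis by (simp add: diag_part_def)
  qed
  have w_less: "u < v" if "w u v \<noteq> 0" for u v
  proof -
    have "u \<le> v" using w that unfolding incidence_def by blast
    moreover have "u \<noteq> v" using that w_diag by blast
    ultimately show ?thesis by simp
  qed
  have "w \<noteq> (\<lambda>_ _. 0)"
  proof
    assume "w = (\<lambda>_ _. 0)"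
    have inj: "inj_on \<phi> incidence"
      using lie unfolding lie_automorphism_def bij_betw_def by blast
    have "\<phi> (ebas x y) = \<phi> (\<lambda>_ _. 0)"
      using \<open>w = (\<lambda>_ _. 0)\<close> elementary_zero[OF \<phi>] unfolding w_def by simp
    then have "(ebas x y :: 'a \<Rightarrow> 'a \<Rightarrow> 'k) = (\<lambda>_ _. 0)"
      by (rule inj_onD[OF inj _ e zero_in_incidence])
    then show False by simp
  qed
  then obtain p q where pq: "w p q \<noteq> 0" by blast
  have eigen: "\<exists>c. inc_bracket (ebas a a) w = inc_smult c w" for a
  proof -
    obtain f where f: "f \<in> incidence" "\<phi> (diag_part f) = ebas a a"
      using elementary_diag_preimage[OF \<phi>] .
    have "inc_bracket (diag_part f) (ebas x y) = inc_smult (f x x - f y y) (ebas x y)"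
      unfolding fun_eq_iff inc_bracket_diag_part[OF e] by (simp add: inc_smult_def ebas_def)
    then have "inc_bracket (ebas a a) w = inc_smult (f x x - f y y) w"
      using lie_automorphism_bracket[OF lie diag_part_in_incidence e, of f]
        lie_automorphism_smult[OF lie e] f(2)
      unfolding w_def by simp
    then show ?thesis by blast
  qed
  have "w = inc_smult (w p q) (ebas p q)"
    using ad_ebas_eigenvector_support_unique[OF eigen w pq w_less[OF pq]] w_less
    by (intro eq_smult_ebas_if_support_singleton) blast
  then show thesis using that w_less[OF pq] pq unfolding w_def by blast
qed

lemma smult_ebas_eq_iff:
  "c \<noteq> 0 \<Longrightarrow>
     inc_smult c (ebas p q) = inc_smult d (ebas p' q') \<longleftrightarrow> c = d \<and> p = p' \<and> q = q'"
  by (auto simp: fun_eq_iff inc_smult_def ebas_def)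

lemma theta_sigma_eq:
  assumes eq: "\<phi> (ebas x y) = inc_smult c (ebas p q)" and "c \<noteq> 0" and "p < q"
  shows "theta \<phi> (ebas x y) = ebas p q" and "sigma \<phi> x y = c"
proof -
  show theta: "theta \<phi> (ebas x y) = ebas p q"
    unfolding theta_def
  proof (rule the_equality)
    show "ebas p q \<in> Bset \<and> (\<exists>k. k \<noteq> 0 \<and> \<phi> (ebas x y) = inc_smult k (ebas p q))"
      using assms unfolding Bset_def by blast
  next
    fix b assume "b \<in> Bset \<and> (\<exists>k. k \<noteq> 0 \<and> \<phi> (ebas x y) = inc_smult k b)"
    then show "b = ebas p q"
      using eq \<open>c \<noteq> 0\<close> unfolding Bset_def by (auto simp: smult_ebas_eq_iff)
  qed
  show "sigma \<phi> x y = c"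
    unfolding sigma_def theta using eq \<open>c \<noteq> 0\<close> by (auto simp: smult_ebas_eq_iff)
qed

lemma smult_ebas_eq_smult_bracket_ebas:
  fixes c d :: "'k::field"
  assumes eq: "inc_smult c (ebas p q) = inc_smult d (inc_bracket (ebas p1 q1) (ebas p2 q2))"
    and "c \<noteq> 0" and "(p1::'a::{finite,order}) < q1" and "p2 < q2"
  shows "(q1 = p2 \<and> p = p1 \<and> q = q2 \<and> c = d) \<or> (q2 = p1 \<and> p = p2 \<and> q = q1 \<and> c = - d)"
proof -
  have "c = d * ((if q1 = p2 then ebas p1 q2 p q else 0) -
                 (if q2 = p1 then ebas p2 q1 p q else 0))"
    using fun_cong[OF fun_cong[OF eq, of p], of q] assms(3,4)
    by (simp add: inc_smult_def inc_bracket_def inc_mult_ebas less_imp_le)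
  then show ?thesis
    using assms(2-4) by (auto simp: ebas_def split: if_splits)
qed

lemma inc_bracket_ebas_ebas:
  "x < y \<Longrightarrow> y < z \<Longrightarrow>
     inc_bracket (ebas x y) (ebas y z) = (ebas x z :: 'a::{finite,order} \<Rightarrow> 'a \<Rightarrow> 'k::field)"
  by (auto simp: fun_eq_iff inc_bracket_def inc_mult_ebas)

theorem lemma5p2:
  fixes \<phi> :: "('a::{finite,order} \<Rightarrow> 'a \<Rightarrow> 'k::field) \<Rightarrow> ('a \<Rightarrow> 'a \<Rightarrow> 'k)"
    and x y z :: 'a
  assumes "poset_connected TYPE('a)"
    and "elementary \<phi>"
    and "x < y" and "y < z"
  shows "(theta \<phi> (ebas x z) = inc_mult (theta \<phi> (ebas x y)) (theta \<phi> (ebas y z)) \<or>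
          theta \<phi> (ebas x z) = inc_mult (theta \<phi> (ebas y z)) (theta \<phi> (ebas x y))) \<and>
         (theta \<phi> (ebas x z) = inc_mult (theta \<phi> (ebas x y)) (theta \<phi> (ebas y z)) \<longrightarrow>
          sigma \<phi> x z = sigma \<phi> x y * sigma \<phi> y z) \<and>
         (theta \<phi> (ebas x z) = inc_mult (theta \<phi> (ebas y z)) (theta \<phi> (ebas x y)) \<longrightarrow>
          sigma \<phi> x z = - (sigma \<phi> x y * sigma \<phi> y z))"
proof -
  have lie: "lie_automorphism \<phi>" using assms(2) unfolding elementary_def by blast
  obtain p1 q1 c1 where 1: "p1 < q1" "c1 \<noteq> 0" "\<phi> (ebas x y) = inc_smult c1 (ebas p1 q1)"
    using elementary_ebas_eq_smult_ebas[OF assms(2,3)] .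
  obtain p2 q2 c2 where 2: "p2 < q2" "c2 \<noteq> 0" "\<phi> (ebas y z) = inc_smult c2 (ebas p2 q2)"
    using elementary_ebas_eq_smult_ebas[OF assms(2,4)] .
  obtain p3 q3 c3 where 3: "p3 < q3" "c3 \<noteq> 0" "\<phi> (ebas x z) = inc_smult c3 (ebas p3 q3)"
    using elementary_ebas_eq_smult_ebas[OF assms(2) order.strict_trans[OF assms(3,4)]] .
  have "inc_smult c3 (ebas p3 q3) = inc_smult (c1 * c2) (inc_bracket (ebas p1 q1) (ebas p2 q2))"
    using lie_automorphism_bracket[OF lie, of "ebas x y" "ebas y z"] assms(3,4) 1 2 3
    by (simp add: inc_bracket_ebas_ebas ebas_in_incidence inc_bracket_smult)
  then have "(q1 = p2 \<and> p3 = p1 \<and> q3 = q2 \<and> c3 = c1 * c2) \<or>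
             (q2 = p1 \<and> p3 = p2 \<and> q3 = q1 \<and> c3 = - (c1 * c2))"
    by (rule smult_ebas_eq_smult_bracket_ebas[OF _ 3(2) 1(1) 2(1)])
  moreover note theta_sigma_eq[where \<phi>=\<phi>, OF 1(3,2,1)] theta_sigma_eq[where \<phi>=\<phi>, OF 2(3,2,1)]
    theta_sigma_eq[where \<phi>=\<phi>, OF 3(3,2,1)]
  ultimately show ?thesis using 1(1) 2(1) by (auto simp: inc_mult_ebas)
qed

end
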